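(* Let $a,b,c$ be positive integers with $ab$ odd and $c$ even. Then there are infinitely many natural numbers $n$ such that $an^2+bn+c$ is a practical number.
   Context: A positive integer $N$ is called a practical number if every integer in $[1,N]$ can be expressed as a sum of distinct positive divisors of $N$. *)

theory Defs
  imports Main
begin

definition practical :: "nat \<Rightarrow> bool" where
  "practical N \<longleftrightarrow> N > 0 \<and>
     (\<forall>m \<in> {1..N}. \<exists>S. S \<subseteq> {d. d dvd N} \<and> \<Sum>S = m)"

end

theory Submission
  imports Defs "HOL-Number_Theory.Number_Theory"
begin

text \<open>
  Write \<open>f n = a n\<^sup>2 + b n + c\<close>. If \<open>N = f n\<close> and \<open>d\<close> divides both \<open>N\<close> and \<open>(2 a n + b) k + 1\<close>,
  then \<open>f (n + N k) = N g\<close> with \<open>d\<close> dividing \<open>g \<le> N d\<^sup>2\<close>, i.e. \<open>f (n + N k) = N d h\<close> with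
  \<open>h \<le> N d + 1\<close>. As a practical number \<open>P\<close> times any \<open>m \<le> P + 1\<close> is practical, practicality of
  \<open>N d\<close> passes to \<open>f (n + N k)\<close>, and the divisibility conditions persist, so the step iterates.

  Take \<open>k = 2 a\<close> and \<open>d = \<bar>(b\<^sup>2 - 4 a c) k\<^sup>2 - 1\<bar>\<close>. Completing the square shows that
  \<open>d dvd (2 a n + b) k + 1\<close> already forces \<open>d dvd f n\<close>, and \<open>d\<close> is odd and coprime to \<open>2 a\<close>, so that
  linear condition is solvable. To start, combine such a solution by the Chinese remainder theorem
  with a root of \<open>f\<close> modulo a large \<open>2\<^sup>K\<close> (which exists since \<open>b\<close> is odd and \<open>c\<close> even): this gives
  \<open>m < 2\<^sup>K d\<close> with \<open>2\<^sup>K d dvd f m\<close>, and then \<open>f m \<cdot> d\<close> is practical.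
\<close>

lemma exists_dvd_mult_add:
  fixes x d y :: nat
  assumes "coprime x d" "0 < d"
  shows "\<exists>r. d dvd x * r + y"
proof -
  obtain u where u: "[x * u = 1] (mod d)" using cong_solve_coprime_nat[OF assms(1)] by auto
  have "[x * (u * ((d - 1) * y)) + y = 1 * ((d - 1) * y) + y] (mod d)"
    unfolding mult.assoc[symmetric] using u by (intro cong_add cong_mult cong_refl)
  also have "1 * ((d - 1) * y) + y = d * y" using assms(2) by (cases d) auto
  finally have "d dvd x * (u * ((d - 1) * y)) + y" using cong_dvd_iff by fastforce
  then show ?thesis ..
qed

lemma infinite_if_no_largest:
  fixes S :: "nat set"
  assumes "n \<in> S" "\<And>n. n \<in> S \<Longrightarrow> \<exists>n' > n. n' \<in> S"
  shows "infinite S"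
proof
  assume "finite S"
  then have "Max S \<in> S" using assms(1) by (intro Max_in) auto
  then obtain n' where "n' > Max S" "n' \<in> S" using assms(2) by blast
  with \<open>finite S\<close> show False using Max_ge leD by blast
qed

lemma practical_sum_of_divisors:
  assumes "practical N" "x \<le> N"
  shows "\<exists>S. S \<subseteq> {d. d dvd N} \<and> \<Sum>S = x"
proof (cases "x = 0")
  case True
  then show ?thesis by (intro exI[of _ "{}"]) auto
next
  case False
  then show ?thesis using assms unfolding practical_def by auto
qed

text \<open>Write \<open>x = m q + r\<close> with \<open>q \<le> N\<close> and \<open>r < m \<le> N + 1\<close>; the divisors representing \<open>q\<close>,
  scaled by \<open>m\<close>, are disjoint from those representing \<open>r\<close>, since they all exceed \<open>r\<close>.\<close>
lemma practical_mult:
  assumes "practical N" "1 \<le> m" "m \<le> N + 1"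
  shows "practical (N * m)"
proof -
  have "N > 0" using assms(1) unfolding practical_def by auto
  have "\<exists>S. S \<subseteq> {d. d dvd N * m} \<and> \<Sum>S = x" if "x \<le> N * m" for x
  proof -
    have "x div m \<le> N" using div_le_mono[OF that, of m] assms(2) by simp
    then obtain Q where Q: "Q \<subseteq> {d. d dvd N}" "\<Sum>Q = x div m"
      using practical_sum_of_divisors[OF assms(1)] by blast
    have "x mod m < m" using assms(2) by simp
    then have "x mod m \<le> N" using assms(3) by linarith
    then obtain R where R: "R \<subseteq> {d. d dvd N}" "\<Sum>R = x mod m"
      using practical_sum_of_divisors[OF assms(1)] by blast
    have fin: "finite Q" "finite R"
      using Q(1) R(1) \<open>N > 0\<close> finite_subset[of _ "{d. d dvd N}"] by auto
    have disj: "(*) m ` Q \<inter> R = {}"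
    proof (rule ccontr)
      assume "(*) m ` Q \<inter> R \<noteq> {}"
      then obtain e where "e \<in> Q" "m * e \<in> R" by blast
      then have "e > 0" using Q(1) \<open>N > 0\<close> by (auto intro: dvd_pos_nat)
      then have "m \<le> m * e" by simp
      also have "m * e \<le> \<Sum>R" using \<open>m * e \<in> R\<close> fin(2) by (intro member_le_sum) auto
      finally show False using R(2) \<open>x mod m < m\<close> by simp
    qed
    have "\<Sum>((*) m ` Q \<union> R) = m * \<Sum>Q + \<Sum>R"
      using fin disj assms(2)
      by (simp add: sum.union_disjoint sum.reindex inj_on_def sum_distrib_left)
    also have "\<dots> = x" using Q(2) R(2) by simp
    finally show ?thesis using Q(1) R(1) by (intro exI[of _ "(*) m ` Q \<union> R"]) auto
  qed
  then show ?thesis using \<open>N > 0\<close> assms(2) unfolding practical_def by auto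
qed

lemma practical_mult_divisor:
  assumes "practical N" "d dvd N" "d > 0"
  shows "practical (N * d)"
proof -
  have "N > 0" using assms(1) unfolding practical_def by simp
  then show ?thesis using assms by (intro practical_mult) (auto dest: dvd_imp_le)
qed

lemma practical_power_two: "practical (2 ^ k)"
proof (induction k)
  case 0
  show ?case unfolding practical_def by (auto intro!: exI[of _ "{1}"])
next
  case (Suc k)
  then show ?case using practical_mult[of "2 ^ k" 2] by (simp add: mult.commute)
qed

lemma practical_mult_of_power_two_dvd:
  fixes K d N :: nat
  defines "M \<equiv> 2 ^ K * d"
  assumes "0 < d" "d \<le> 2 ^ K + 1" "M dvd N" "0 < N" "N \<le> d * M * M"
  shows "practical (N * d)"
proof -
  obtain R where R: "N = M * R" using assms(4) by blast
  have "practical M" unfolding M_def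
    by (rule practical_mult[OF practical_power_two]) (use assms(2,3) in auto)
  moreover have "d \<le> M + 1"
    unfolding M_def using mult_le_mono1[OF one_le_power[of "2::nat" K], of d] by linarith
  ultimately have "practical (M * d)" using assms(2) by (intro practical_mult) auto
  moreover have "1 \<le> R" using R assms(5) by (cases R) auto
  moreover have "R \<le> M * d + 1"
  proof -
    have "M * R \<le> M * (M * d)" using R assms(6) by (simp add: ac_simps)
    then show ?thesis using R assms(5) by simp
  qed
  ultimately have "practical (M * d * R)" by (rule practical_mult)
  then show ?thesis using R by (simp add: ac_simps)
qed

definition quad :: "nat \<Rightarrow> nat \<Rightarrow> nat \<Rightarrow> nat \<Rightarrow> nat" where
  "quad a b c n = a * n^2 + b * n + c"

lemma quad_shift: "quad a b c (n + x) = quad a b c n + x * (2 * a * n + b) + a * x^2"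
  unfolding quad_def by (simp add: power2_eq_square algebra_simps)

lemma quad_shift_by_value:
  "quad a b c (n + quad a b c n * k)
     = quad a b c n * (a * quad a b c n * k^2 + ((2 * a * n + b) * k + 1))"
  unfolding quad_shift by (simp add: power2_eq_square algebra_simps)

lemma cong_quad: "[x = y] (mod M) \<Longrightarrow> [quad a b c x = quad a b c y] (mod M)"
  unfolding quad_def by (intro cong_add cong_mult cong_pow cong_refl)

lemma quad_root_mod_power_two:
  assumes "odd b" "even c"
  shows "\<exists>r. 2 ^ K dvd quad a b c r"
proof (induction K)
  case 0
  then show ?case by simp
next
  case (Suc K)
  show ?case
  proof (cases "K = 0")
    case True
    then show ?thesis using assms(2) by (intro exI[of _ 0]) (simp add: quad_def)
  next
    case False
    from Suc obtain r q where q: "quad a b c r = 2 ^ K * q" by (auto elim: dvdE)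
    show ?thesis
    proof (cases "even q")
      case True
      then show ?thesis using q by (intro exI[of _ r]) auto
    next
      case False
      txt \<open>Shifting the root by \<open>2^K\<close> adds \<open>2^K\<close> times an odd number.\<close>
      have "quad a b c (r + 2 ^ K) = 2 ^ K * (q + (2 * a * r + b) + a * 2 ^ K)"
        unfolding quad_shift q by (simp add: power2_eq_square algebra_simps)
      moreover have "even (q + (2 * a * r + b) + a * 2 ^ K)"
        using False \<open>K \<noteq> 0\<close> assms(1) by simp
      ultimately show ?thesis by (intro exI[of _ "r + 2 ^ K"]) auto
    qed
  qed
qed

lemma linear_le_quad_add: "(2 * a * n + b) * k + 1 \<le> quad a b c n + quad a b 1 k"
proof -
  have "int (2 * n * k) \<le> int (n^2 + k^2)"
    using sum_squares_ge_zero[of "int n - int k" 0] by (simp add: power2_eq_square algebra_simps)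
  then have "a * (2 * n * k) \<le> a * (n^2 + k^2)" by (intro mult_le_mono2) linarith
  then show ?thesis unfolding quad_def by (simp add: algebra_simps)
qed

lemma quad_le_of_less:
  assumes "m < M" "b + c \<le> M" "a + 1 \<le> d"
  shows "quad a b c m \<le> d * M * M"
proof -
  have "quad a b c m \<le> a * M^2 + b * M + c"
    unfolding quad_def using assms(1) by (intro add_le_mono mult_le_mono power_mono) auto
  also have "\<dots> \<le> a * M^2 + (b + c) * M"
    using assms(1) by (simp add: algebra_simps)
  also have "\<dots> \<le> (a + 1) * M^2"
    using mult_le_mono1[OF assms(2)] by (simp add: power2_eq_square algebra_simps)
  also have "\<dots> \<le> d * M * M"
    using mult_le_mono1[OF assms(3)] by (simp add: power2_eq_square mult.assoc)
  finally show ?thesis .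
qed

lemma practical_quad_step:
  fixes a b c n k d :: nat
  defines "N \<equiv> quad a b c n"
  assumes "practical (N * d)" "d dvd N" "d dvd (2 * a * n + b) * k + 1"
    and "quad a b 1 k \<le> N" "a * k^2 + 2 \<le> d^2" "0 < k"
  shows "practical (quad a b c (n + N * k)) \<and> d dvd (2 * a * (n + N * k) + b) * k + 1
    \<and> N \<le> quad a b c (n + N * k) \<and> n < n + N * k"
proof -
  define g where "g = a * N * k^2 + ((2 * a * n + b) * k + 1)"
  have factor: "quad a b c (n + N * k) = N * g"
    unfolding g_def N_def by (rule quad_shift_by_value)
  have "N > 0" using assms(5) by (simp add: quad_def)
  have "d dvd g" unfolding g_def using assms(3,4) by (metis dvd_add dvd_mult dvd_mult2)
  then obtain h where h: "g = d * h" ..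
  have "(2 * a * n + b) * k + 1 \<le> 2 * N"
    using linear_le_quad_add[of a n b k c] assms(5) unfolding N_def by linarith
  then have "g \<le> N * (a * k^2 + 2)" unfolding g_def by (simp add: algebra_simps)
  also have "\<dots> \<le> N * d^2" using assms(6) by (rule mult_le_mono2)
  also have "\<dots> \<le> d * (N * d + 1)" by (simp add: power2_eq_square algebra_simps)
  finally have "d * h \<le> d * (N * d + 1)" using h by simp
  moreover have "d > 0" using assms(6) by (cases d) auto
  ultimately have "h \<le> N * d + 1" using mult_le_cancel1 by blast
  moreover have "1 \<le> g" unfolding g_def by simp
  then have "1 \<le> h" using h by (cases h) auto
  ultimately have "practical (N * d * h)" by (intro practical_mult[OF assms(2)])
  then have "practical (quad a b c (n + N * k))" using factor h by (simp add: mult.assoc)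
  moreover have "(2 * a * (n + N * k) + b) * k + 1 = ((2 * a * n + b) * k + 1) + N * (2 * a * k * k)"
    by (simp add: algebra_simps)
  then have "d dvd (2 * a * (n + N * k) + b) * k + 1" using assms(3,4) by (metis dvd_add dvd_mult2)
  moreover have "N \<le> quad a b c (n + N * k)" using factor \<open>1 \<le> g\<close> by simp
  ultimately show ?thesis using \<open>N > 0\<close> assms(7) by simp
qed

lemma completing_the_square:
  fixes a b c k m :: "'a::comm_ring_1"
  shows "(2 * a * k)^2 * (a * m^2 + b * m + c)
    = a * (((2 * a * m + b) * k + 1) * ((2 * a * m + b) * k - 1) - ((b^2 - 4 * a * c) * k^2 - 1))"
  by (simp add: power2_eq_square algebra_simps)

text \<open>This is \<open>\<bar>\<Delta> k\<^sup>2 - 1\<bar>\<close> with \<open>\<Delta> = b\<^sup>2 - 4 a c\<close> and \<open>k = 2 a\<close>, the subtracted term in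
  the square completion above.\<close>
definition quad_modulus :: "nat \<Rightarrow> nat \<Rightarrow> nat \<Rightarrow> nat" where
  "quad_modulus a b c = nat \<bar>(int b^2 - 4 * int a * int c) * (2 * int a)^2 - 1\<bar>"

lemma int_quad_modulus:
  "int (quad_modulus a b c) = \<bar>(int b^2 - 4 * int a * int c) * (2 * int a)^2 - 1\<bar>"
  unfolding quad_modulus_def by simp

lemma coprime_quad_modulus: "coprime (2 * a) (quad_modulus a b c)"
proof -
  have "coprime (int (2 * a)) (int (2 * a) * y - 1)" for y
    using coprime_doff_one_right[of "int (2 * a) * y"] coprime_mult_left_iff by blast
  moreover have "(int b^2 - 4 * int a * int c) * (2 * int a)^2 - 1
      = int (2 * a) * (2 * int a * (int b^2 - 4 * int a * int c)) - 1"
    by (simp add: power2_eq_square algebra_simps)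
  ultimately have "coprime (int (2 * a)) (int (quad_modulus a b c))"
    unfolding int_quad_modulus by (metis coprime_abs_right_iff)
  then show ?thesis by (simp only: coprime_int_iff)
qed

lemma quad_modulus_dvd_quad:
  assumes "quad_modulus a b c dvd (2 * a * m + b) * (2 * a) + 1"
  shows "quad_modulus a b c dvd quad a b c m"
proof -
  define E where "E = (int b^2 - 4 * int a * int c) * (2 * int a)^2 - 1"
  define Y where "Y = (2 * int a * int m + int b) * (2 * int a)"
  define t where "t = int (2 * a)"
  have "int (quad_modulus a b c) dvd int ((2 * a * m + b) * (2 * a) + 1)"
    using assms by (simp only: int_dvd_int_iff)
  then have "E dvd Y + 1" unfolding int_quad_modulus E_def Y_def by (simp add: add.commute)
  then have "E dvd int a * ((Y + 1) * (Y - 1) - E)" by simp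
  also have "int a * ((Y + 1) * (Y - 1) - E) = (t * t)^2 * int (quad a b c m)"
    unfolding E_def Y_def t_def quad_def
    using completing_the_square[of "int a" "2 * int a" "int m" "int b" "int c"] by simp
  finally have "E dvd (t * t)^2 * int (quad a b c m)" .
  moreover have "coprime t E"
    using coprime_quad_modulus[of a b c] unfolding E_def t_def
    by (metis coprime_abs_right_iff coprime_int_iff int_quad_modulus)
  then have "coprime E ((t * t)^2)" by (simp add: coprime_commute)
  ultimately have "E dvd int (quad a b c m)" by (simp add: coprime_dvd_mult_right_iff)
  then have "int (quad_modulus a b c) dvd int (quad a b c m)" unfolding int_quad_modulus E_def by simp
  then show ?thesis by (simp only: int_dvd_int_iff)
qed

lemma quad_modulus_lower_bounds:
  assumes "0 < a" "odd b"
  shows "a * (2 * a)^2 + 2 \<le> (quad_modulus a b c)^2" "a + 1 \<le> quad_modulus a b c"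
proof -
  define D where "D = int b^2 - 4 * int a * int c"
  define d where "d = quad_modulus a b c"
  have "odd D" unfolding D_def using assms(2) by simp
  then have "1 \<le> \<bar>D\<bar>" by (cases "D = 0") auto
  then have "(2 * int a)^2 \<le> \<bar>D\<bar> * (2 * int a)^2"
    using mult_right_mono[of 1 "\<bar>D\<bar>" "(2 * int a)^2"] by simp
  also have "\<dots> \<le> int d + 1" unfolding d_def int_quad_modulus D_def[symmetric] by (simp add: abs_mult)
  finally have "int (4 * a^2) \<le> int (d + 1)" by (simp add: power2_eq_square)
  then have "4 * a^2 \<le> d + 1" by (simp only: of_nat_le_iff)
  moreover have "1 \<le> a^2" using assms(1) by simp
  ultimately have d: "3 * a^2 \<le> d" by linarith
  have "a \<le> a^2" using assms(1) by (simp add: power2_eq_square)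
  have "a * (2 * a)^2 = 4 * (a * a^2)" by (simp add: power2_eq_square)
  moreover have "a * a^2 \<le> a^2 * a^2" using \<open>a \<le> a^2\<close> by (rule mult_le_mono1)
  moreover have "1 \<le> a^2 * a^2" using mult_le_mono[OF \<open>1 \<le> a^2\<close> \<open>1 \<le> a^2\<close>] by (simp only: mult_1)
  ultimately have "a * (2 * a)^2 + 2 \<le> 9 * (a^2 * a^2)" by linarith
  also have "\<dots> \<le> d^2" using mult_le_mono[OF d d] by (simp add: power2_eq_square)
  finally show "a * (2 * a)^2 + 2 \<le> (quad_modulus a b c)^2" unfolding d_def .
  show "a + 1 \<le> quad_modulus a b c" using \<open>a \<le> a^2\<close> d \<open>1 \<le> a^2\<close> unfolding d_def by linarith
qed

text \<open>The starting point: a value that is \<open>0\<close> modulo a large power of \<open>2\<close> and modulo \<open>d\<close>, taken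
  below their product, is \<open>2\<^sup>K d\<close> times a small cofactor.\<close>
lemma exists_practical_quad_mult:
  fixes a b c d r C :: nat
  assumes "odd b" "even c" "0 < c" "odd d" "a + 1 \<le> d" "d dvd quad a b c r"
  shows "\<exists>m. [m = r] (mod d) \<and> practical (quad a b c m * d) \<and> C \<le> quad a b c m"
proof -
  define K where "K = d + b + c + C"
  have "K < 2 ^ K" by (rule less_exp)
  then have big: "d \<le> 2 ^ K" "b + c \<le> 2 ^ K" "C \<le> 2 ^ K" unfolding K_def by linarith+
  have "0 < d" using assms(4) by (rule odd_pos)
  obtain r' where r': "2 ^ K dvd quad a b c r'" using quad_root_mod_power_two assms(1,2) by blast
  have cop: "coprime (2 ^ K) d" using assms(4) by simp
  have "\<exists>!m. m < 2 ^ K * d \<and> [m = r'] (mod 2 ^ K) \<and> [m = r] (mod d)"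
    using \<open>0 < d\<close> by (intro binary_chinese_remainder_unique_nat[OF cop]) auto
  then obtain m where m: "m < 2 ^ K * d" "[m = r'] (mod 2 ^ K)" "[m = r] (mod d)"
    by (blast dest: ex1_implies_ex)
  have "2 ^ K dvd quad a b c m" using r' cong_dvd_iff[OF cong_quad[OF m(2)]] by simp
  moreover have "d dvd quad a b c m" using assms(6) cong_dvd_iff[OF cong_quad[OF m(3)]] by simp
  ultimately have dvd: "2 ^ K * d dvd quad a b c m" using cop by (rule divides_mult)
  have pos: "0 < quad a b c m" using assms(3) by (simp add: quad_def)
  have "2 ^ K \<le> 2 ^ K * d" using \<open>0 < d\<close> by simp
  then have "quad a b c m \<le> d * (2 ^ K * d) * (2 ^ K * d)"
    using big(2) by (intro quad_le_of_less[OF m(1) _ assms(5)]) linarith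
  then have "practical (quad a b c m * d)"
    using big(1) by (intro practical_mult_of_power_two_dvd[OF \<open>0 < d\<close> _ dvd pos]) linarith
  moreover have "C \<le> quad a b c m" using dvd_imp_le[OF dvd_mult_left[OF dvd] pos] big(3) by linarith
  ultimately show ?thesis using m(3) by blast
qed

theorem corollary2p7:
  fixes a b c :: nat
  assumes "a > 0" "b > 0" "c > 0" "odd (a * b)" "even c"
  shows "infinite {n :: nat. practical (a * n^2 + b * n + c)}"
proof -
  define d k where "d = quad_modulus a b c" and "k = 2 * a"
  have "odd b" using assms(4) by simp
  have d: "coprime k d" "a * k^2 + 2 \<le> d^2" "a + 1 \<le> d"
    unfolding d_def k_def using coprime_quad_modulus quad_modulus_lower_bounds assms(1) \<open>odd b\<close>
    by auto
  have "odd d" "0 < d" "0 < k" using d(1,3) assms(1) unfolding k_def by auto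
  have lin_dvd: "d dvd quad a b c n" if "d dvd (2 * a * n + b) * k + 1" for n
    using that unfolding d_def k_def by (rule quad_modulus_dvd_quad)
  obtain r where "d dvd (k * k) * r + (b * k + 1)"
    using exists_dvd_mult_add[of "k * k" d "b * k + 1"] d(1) \<open>0 < d\<close> by auto
  then have "d dvd (2 * a * r + b) * k + 1" unfolding k_def by (simp add: algebra_simps)
  then obtain m where m: "[m = r] (mod d)" "practical (quad a b c m * d)" "quad a b 1 k \<le> quad a b c m"
    using exists_practical_quad_mult[OF \<open>odd b\<close> assms(5,3) \<open>odd d\<close> d(3) lin_dvd] by blast
  have "[(2 * a * m + b) * k + 1 = (2 * a * r + b) * k + 1] (mod d)"
    using m(1) by (intro cong_add cong_mult cong_refl)
  then have "d dvd (2 * a * m + b) * k + 1"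
    using \<open>d dvd (2 * a * r + b) * k + 1\<close> cong_dvd_iff by blast
  define S where "S = {n. practical (quad a b c n) \<and> d dvd (2 * a * n + b) * k + 1
    \<and> quad a b 1 k \<le> quad a b c n}"
  have step: "\<exists>n' > n. n' \<in> S"
    if "practical (quad a b c n * d)" "d dvd (2 * a * n + b) * k + 1" "quad a b 1 k \<le> quad a b c n" for n
    using practical_quad_step[OF that(1) lin_dvd[OF that(2)] that(2,3) d(2) \<open>0 < k\<close>] that(3)
    unfolding S_def by (intro exI[of _ "n + quad a b c n * k"]) auto
  obtain n where "n \<in> S" using step[OF m(2) \<open>d dvd (2 * a * m + b) * k + 1\<close> m(3)] by blast
  then have "infinite S"
  proof (rule infinite_if_no_largest)
    show "\<exists>n' > n. n' \<in> S" if "n \<in> S" for n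
      using that step practical_mult_divisor lin_dvd \<open>0 < d\<close> unfolding S_def by blast
  qed
  moreover have "S \<subseteq> {n. practical (a * n^2 + b * n + c)}" unfolding S_def quad_def by auto
  ultimately show ?thesis by (rule infinite_super[rotated])
qed

end
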